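(* Let $L$ be a right Leibniz algebra. Then $L$ is prime if and only if $\mathrm{ran}_L(I)=\{0\}$ for every nonzero ideal $I$ of $L$.
   Context: A right Leibniz algebra satisfies $[x,[y,z]]=[[x,y],z]-[[x,z],y]$. Ideals: subspaces $I$ with $[I,L]\subseteq I$, $[L,I]\subseteq I$. $L$ is prime if $[I,J]\ne\{0\}$ for any two nonzero ideals $I,J$ (where $[I,J]$ is the span of $[x,y]$, $x\in I$, $y\in J$). $\mathrm{ran}_L(I)=\{x\in L:[y,x]=0\ \forall y\in I\}$. *)

theory Defs
  imports Complex_Main
begin

definition right_leibniz_algebra ::
  "('k::field \<Rightarrow> 'v::ab_group_add \<Rightarrow> 'v) \<Rightarrow> ('v \<Rightarrow> 'v \<Rightarrow> 'v) \<Rightarrow> bool" where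
  "right_leibniz_algebra scale br \<longleftrightarrow>
     vector_space scale \<and>
     (\<forall>x y z. br (x + y) z = br x z + br y z) \<and>
     (\<forall>x y z. br x (y + z) = br x y + br x z) \<and>
     (\<forall>a x y. br (scale a x) y = scale a (br x y)) \<and>
     (\<forall>a x y. br x (scale a y) = scale a (br x y)) \<and>
     (\<forall>x y z. br x (br y z) = br (br x y) z - br (br x z) y)"

definition lideal :: "('k::field \<Rightarrow> 'v::ab_group_add \<Rightarrow> 'v) \<Rightarrow> ('v \<Rightarrow> 'v \<Rightarrow> 'v) \<Rightarrow> 'v set \<Rightarrow> bool" where
  "lideal scale br I \<longleftrightarrow> module.subspace scale I \<and>
     (\<forall>x\<in>I. \<forall>y. br x y \<in> I) \<and> (\<forall>x\<in>I. \<forall>y. br y x \<in> I)"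

definition bracket_set :: "('k::field \<Rightarrow> 'v::ab_group_add \<Rightarrow> 'v) \<Rightarrow> ('v \<Rightarrow> 'v \<Rightarrow> 'v) \<Rightarrow> 'v set \<Rightarrow> 'v set \<Rightarrow> 'v set" where
  "bracket_set scale br I J = module.span scale {br x y | x y. x \<in> I \<and> y \<in> J}"

definition prime_leibniz :: "('k::field \<Rightarrow> 'v::ab_group_add \<Rightarrow> 'v) \<Rightarrow> ('v \<Rightarrow> 'v \<Rightarrow> 'v) \<Rightarrow> bool" where
  "prime_leibniz scale br \<longleftrightarrow>
     (\<forall>I J. lideal scale br I \<and> I \<noteq> {0} \<and> lideal scale br J \<and> J \<noteq> {0}
        \<longrightarrow> bracket_set scale br I J \<noteq> {0})"

definition ran_L :: "('v \<Rightarrow> 'v \<Rightarrow> 'v::zero) \<Rightarrow> 'v set \<Rightarrow> 'v set" where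
  "ran_L br I = {x. \<forall>y\<in>I. br y x = 0}"

end

theory Submission
  imports Defs
begin

text \<open>The right annihilator ran(I) of an ideal I is again an ideal, and [I, ran(I)] = 0 by
  construction, so in a prime algebra it must vanish. Conversely, [I, J] = 0 says exactly that
  J lies in ran(I); so if all these annihilators vanish, no two nonzero ideals have zero product.\<close>

lemma right_leibniz_algebra_module:
  assumes "right_leibniz_algebra scale br"
  shows "module scale"
  using assms by (simp add: right_leibniz_algebra_def module_iff_vector_space)

lemma lideal_zero_mem:
  assumes "module scale" and "lideal scale br I"
  shows "0 \<in> I"
  using assms module.subspace_0 unfolding lideal_def by blast

lemma bracket_set_eq_zero_iff_subset_ran_L:
  assumes "module scale"
  shows "bracket_set scale br I J = {0} \<longleftrightarrow> J \<subseteq> ran_L br I"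
proof -
  let ?S = "{br x y | x y. x \<in> I \<and> y \<in> J}"
  have "module.span scale ?S = {0} \<longleftrightarrow> ?S \<subseteq> {0}"
  proof
    assume "module.span scale ?S = {0}"
    then show "?S \<subseteq> {0}"
      using module.span_superset[OF assms] by (rule subst)
  next
    assume "?S \<subseteq> {0}"
    then have "module.span scale ?S \<subseteq> {0}"
      using module.span_minimal[OF assms] module.subspace_single_0[OF assms] by blast
    then show "module.span scale ?S = {0}"
      using module.span_zero[OF assms] by blast
  qed
  also have "\<dots> \<longleftrightarrow> J \<subseteq> ran_L br I"
    unfolding ran_L_def by blast
  finally show ?thesis
    unfolding bracket_set_def .
qed

lemma lideal_ran_L:
  assumes "right_leibniz_algebra scale br" and "lideal scale br I"
  shows "lideal scale br (ran_L br I)"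
proof -
  have add_left: "\<And>x y z. br (x + y) z = br x z + br y z"
    and add_right: "\<And>x y z. br x (y + z) = br x y + br x z"
    and scale_right: "\<And>a x y. br x (scale a y) = scale a (br x y)"
    and leibniz: "\<And>x y z. br x (br y z) = br (br x y) z - br (br x z) y"
    using assms(1) unfolding right_leibniz_algebra_def by blast+
  have zero_left: "br 0 y = 0" for y
    using add_left[of 0 0 y] by simp
  have zero_right: "br x 0 = 0" for x
    using add_right[of x 0 0] by simp
  have I_closed: "br u y \<in> I" if "u \<in> I" for u y
    using assms(2) that unfolding lideal_def by blast
  have "module.subspace scale (ran_L br I)"
    using right_leibniz_algebra_module[OF assms(1)]
    by (simp add: module.subspace_def module.scale_zero_right ran_L_def
        add_right scale_right zero_right)
  moreover have "br x y \<in> ran_L br I \<and> br y x \<in> ran_L br I" if "x \<in> ran_L br I" for x y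
  proof -
    \<comment> \<open>Both [u,[x,y]] and [u,[y,x]] expand into [u,x] and [[u,y],x], which vanish
      because u and [u,y] lie in I.\<close>
    have "br u x = 0" "br (br u y) x = 0" if "u \<in> I" for u
      using \<open>x \<in> ran_L br I\<close> that I_closed unfolding ran_L_def by blast+
    then show ?thesis
      unfolding ran_L_def using leibniz[of _ x y] leibniz[of _ y x] zero_left by simp
  qed
  ultimately show ?thesis
    unfolding lideal_def by blast
qed

theorem proposition2p9:
  fixes scale :: "'k::field \<Rightarrow> 'v::ab_group_add \<Rightarrow> 'v" and br :: "'v \<Rightarrow> 'v \<Rightarrow> 'v"
  assumes "right_leibniz_algebra scale br"
  shows "prime_leibniz scale br \<longleftrightarrow>
           (\<forall>I. lideal scale br I \<and> I \<noteq> {0} \<longrightarrow> ran_L br I = {0})"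
proof -
  have module: "module scale"
    using assms by (rule right_leibniz_algebra_module)
  have "prime_leibniz scale br \<longleftrightarrow>
        (\<forall>I J. lideal scale br I \<and> I \<noteq> {0} \<and> lideal scale br J \<and> J \<noteq> {0}
           \<longrightarrow> \<not> J \<subseteq> ran_L br I)"
    unfolding prime_leibniz_def bracket_set_eq_zero_iff_subset_ran_L[OF module] ..
  also have "\<dots> \<longleftrightarrow> (\<forall>I. lideal scale br I \<and> I \<noteq> {0} \<longrightarrow> ran_L br I = {0})"
    using lideal_ran_L[OF assms] lideal_zero_mem[OF module] by blast
  finally show ?thesis .
qed

end
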